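(* Let $s\ge 1$, $q=4^{2s}$, and let $\theta$ be the automorphism of $F_q$ given by $\theta(a)=a^{4^s}$. Let $n$ be an even positive integer, let $g(x)\in F_q[x;\theta]$ be a right divisor of $x^n-1$ in $F_q[x;\theta]$ whose degree $m$ is odd, and let $C=\langle g(x)\rangle$ be the skew cyclic code of length $n$ over $F_q$ it generates. If $g(x)$ is a $\theta$-palindromic polynomial, then $C$ is a reversible DNA code. Conversely, if $C$ is a reversible DNA code, then $C$ is generated by a $\theta$-palindromic polynomial.
   Context: $F_q[x;\theta]$ is the skew polynomial ring: polynomials $\sum a_ix^i$ with $a_i\in F_q$, usual addition, and multiplication determined by $xa=\theta(a)x$ for $a\in F_q$. A skew cyclic code of length $n$ is a linear code $C\subseteq F_q^n$ such that $(\theta(c_{n-1}),\theta(c_0),\ldots,\theta(c_{n-2}))\in C$ whenever $(c_0,\ldots,c_{n-1})\in C$; identifying $(c_0,\ldots,c_{n-1})$ with $c_0+c_1x+\dots+c_{n-1}x^{n-1}$, such codes are the left $F_q[x;\theta]$-submodules of $F_q[x;\theta]/(x^n-1)$, and $\langle g(x)\rangle$ denotes the left submodule generated by $g(x)$ (the generator need not be monic). A polynomial $f(x)=a_0+a_1x+\dots+a_tx^t$ of degree $t$ is palindromic if $a_i=a_{t-i}$ for all $i$, and $\theta$-palindromic if $a_i=\theta(a_{t-i})$ for all $i$. DNA correspondence: there is a fixed bijection $\tau:F_{4^{2s}}\to\{A,T,G,C\}^{2s}$ such that for every $\beta$, $\tau(\beta^{4^s})$ is the reverse of the string $\tau(\beta)$;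 it extends to $\phi:F_q^n\to\{A,T,G,C\}^{2sn}$ by concatenation. A code $C\subseteq F_q^n$ is a reversible DNA code if the reverse string $\phi(c)^r$ lies in $\phi(C)$ for all $c\in C$; equivalently, $(\theta(c_{n-1}),\ldots,\theta(c_1),\theta(c_0))\in C$ for every $(c_0,\ldots,c_{n-1})\in C$. *)

theory Defs
  imports "HOL-Computational_Algebra.Polynomial"
begin

text \<open>Skew polynomial ring F[x;theta]: elements are represented by ordinary
  coefficient polynomials (type 'a poly); addition is the usual one, and
  multiplication is determined by x a = theta(a) x, i.e.
  (sum a_i x^i)(sum b_j x^j) = sum a_i theta^i(b_j) x^(i+j).\<close>

definition skew_mult :: "('a::comm_ring_1 \<Rightarrow> 'a) \<Rightarrow> 'a poly \<Rightarrow> 'a poly \<Rightarrow> 'a poly" where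
  "skew_mult \<theta> p r =
     (\<Sum>i\<le>degree p. \<Sum>j\<le>degree r. monom (coeff p i * (\<theta> ^^ i) (coeff r j)) (i + j))"

definition skew_right_dvd :: "('a::comm_ring_1 \<Rightarrow> 'a) \<Rightarrow> 'a poly \<Rightarrow> 'a poly \<Rightarrow> bool" where
  "skew_right_dvd \<theta> g f \<longleftrightarrow> (\<exists>h. f = skew_mult \<theta> h g)"

definition xn_minus_1 :: "nat \<Rightarrow> 'a::comm_ring_1 poly" where
  "xn_minus_1 n = monom 1 n - 1"

text \<open>Canonical representative in F[x;theta]/(x^n-1) (degree < n), as a vector
  (c_0,...,c_(n-1)) of length n. Since x^i - x^(i mod n) lies in the left ideal
  generated by x^n - 1, the coefficient of x^k is the sum of the coefficients of
  x^i with i mod n = k.\<close>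
definition reduce_vec :: "nat \<Rightarrow> 'a::comm_ring_1 poly \<Rightarrow> 'a list" where
  "reduce_vec n p = map (\<lambda>k. \<Sum>i\<in>{i. i \<le> degree p \<and> i mod n = k}. coeff p i) [0..<n]"

definition skew_code :: "('a::comm_ring_1 \<Rightarrow> 'a) \<Rightarrow> nat \<Rightarrow> 'a poly \<Rightarrow> 'a list set" where
  "skew_code \<theta> n g = {reduce_vec n (skew_mult \<theta> f g) | f. True}"

definition theta_palindromic :: "('a::zero \<Rightarrow> 'a) \<Rightarrow> 'a poly \<Rightarrow> bool" where
  "theta_palindromic \<theta> p \<longleftrightarrow> p \<noteq> 0 \<and>
     (\<forall>i\<le>degree p. coeff p i = \<theta> (coeff p (degree p - i)))"

text \<open>Reversible DNA code (equivalent form from the context):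
  (theta(c_(n-1)),...,theta(c_0)) \<in> C for all (c_0,...,c_(n-1)) \<in> C.\<close>
definition reversible_DNA :: "('a \<Rightarrow> 'a) \<Rightarrow> 'a list set \<Rightarrow> bool" where
  "reversible_DNA \<theta> C \<longleftrightarrow> (\<forall>c\<in>C. map \<theta> (rev c) \<in> C)"

end

theory Submission
  imports Defs "HOL-Algebra.FiniteProduct"
begin

text \<open>
  Write \<open>p\<^sup>*\<close> for the \<open>\<theta>\<close>-reflection of \<open>p\<close> at a degree \<open>d\<close>: the coefficient of
  \<open>x\<^sup>i\<close> becomes \<open>\<theta>\<close> applied to that of \<open>x\<^sup>d\<^sup>-\<^sup>i\<close>. Since \<open>\<theta>\<close> is an involution,
  reflection at \<open>D + m\<close> with \<open>D\<close> even turns a skew product \<open>f g\<close> into \<open>f\<^sup>* g\<^sup>*\<close>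
  (reflections at \<open>D\<close> and at \<open>m = deg g\<close>), and
  when \<open>D + m \<equiv> -1 (mod n)\<close> it reverses the reduced codeword (applying \<open>\<theta>\<close> entrywise).
  As \<open>n\<close> is even and \<open>m\<close> odd, such \<open>D\<close> exist, so for \<open>g\<^sup>* = g\<close> the reverse of the
  codeword of \<open>f g\<close> is that of \<open>f\<^sup>* g\<close>.

  Conversely, reversing the codeword of \<open>g\<close> itself gives \<open>x\<^sup>D g\<^sup>*\<close> with \<open>D = n - 1 - m\<close>,
  which must equal \<open>r g\<close> for a remainder \<open>r\<close> modulo the check polynomial \<open>h\<close>
  (\<open>x\<^sup>n - 1 = h g\<close>). Comparing degrees and the lowest coefficients (\<open>g(0) \<noteq> 0\<close>) forces
  \<open>r = c x\<^sup>D\<close>, i.e. \<open>g\<^sup>* = c g\<close>. Then \<open>\<beta> g + (\<beta> g)\<^sup>* = (\<beta> + \<theta>(\<beta>) c) g\<close> is a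
  \<open>\<theta>\<close>-palindromic generator of the same code once the scalar is nonzero, and some \<open>\<beta>\<close>
  achieves this because \<open>\<theta>\<close> is not the identity.
\<close>

section \<open>Skew polynomial multiplication\<close>

locale ring_endomorphism =
  fixes \<theta> :: "'a::comm_ring_1 \<Rightarrow> 'a"
  assumes hom_add: "\<theta> (a + b) = \<theta> a + \<theta> b"
    and hom_mult: "\<theta> (a * b) = \<theta> a * \<theta> b"
    and hom_one: "\<theta> 1 = 1"
begin

lemma hom_zero [simp]: "\<theta> 0 = 0"
  using hom_add[of 0 0] by simp

lemma hom_sum: "\<theta> (sum f A) = (\<Sum>x\<in>A. \<theta> (f x))"
  by (induction A rule: infinite_finite_induct) (auto simp: hom_add)

lemma ring_endomorphism_funpow: "ring_endomorphism (\<theta> ^^ i)"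
  by (induction i) (unfold_locales, auto simp: hom_add hom_mult hom_one ring_endomorphism_def)

lemmas funpow_hom_add = ring_endomorphism.hom_add[OF ring_endomorphism_funpow]

lemmas funpow_hom_mult = ring_endomorphism.hom_mult[OF ring_endomorphism_funpow]

lemmas funpow_hom_one [simp] = ring_endomorphism.hom_one[OF ring_endomorphism_funpow]

lemmas funpow_hom_zero [simp] = ring_endomorphism.hom_zero[OF ring_endomorphism_funpow]

lemmas funpow_hom_sum = ring_endomorphism.hom_sum[OF ring_endomorphism_funpow]

lemma coeff_skew_mult:
  "coeff (skew_mult \<theta> p r) k = (\<Sum>i\<le>k. coeff p i * (\<theta> ^^ i) (coeff r (k - i)))"
proof -
  define T where "T i = coeff p i * (\<theta> ^^ i) (coeff r (k - i))" for i
  have "coeff (skew_mult \<theta> p r) k =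
     (\<Sum>i\<le>degree p. \<Sum>j\<le>degree r.
        if j = k - i \<and> i \<le> k then coeff p i * (\<theta> ^^ i) (coeff r j) else 0)"
    unfolding skew_mult_def coeff_sum coeff_monom
    by (intro sum.cong refl) auto
  also have "\<dots> = (\<Sum>i\<le>degree p. if i \<le> k then T i else 0)"
    by (intro sum.cong refl) (auto simp: T_def coeff_eq_0 not_le)
  also have "\<dots> = (\<Sum>i\<le>k. T i)"
    by (subst sum.inter_filter[symmetric], simp, rule sum.mono_neutral_left)
       (auto simp: T_def coeff_eq_0 dest: mult_not_zero intro: le_degree)
  finally show ?thesis by (simp add: T_def)
qed

lemma skew_mult_add_left: "skew_mult \<theta> (p + q) r = skew_mult \<theta> p r + skew_mult \<theta> q r"
  by (rule poly_eqI) (simp add: coeff_skew_mult distrib_right sum.distrib)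

lemma skew_mult_add_right: "skew_mult \<theta> p (q + r) = skew_mult \<theta> p q + skew_mult \<theta> p r"
  by (rule poly_eqI) (simp add: coeff_skew_mult funpow_hom_add distrib_left sum.distrib)

lemma skew_mult_zero_left [simp]: "skew_mult \<theta> 0 r = 0"
  by (rule poly_eqI) (simp add: coeff_skew_mult)

lemma skew_mult_zero_right [simp]: "skew_mult \<theta> p 0 = 0"
  by (rule poly_eqI) (simp add: coeff_skew_mult)

lemma skew_mult_diff_right: "skew_mult \<theta> p (q - r) = skew_mult \<theta> p q - skew_mult \<theta> p r"
  using skew_mult_add_right[of p "q - r" r] by (simp add: eq_diff_eq)

lemma coeff_skew_mult_monom:
  "coeff (skew_mult \<theta> (monom c j) p) k = (if j \<le> k then c * (\<theta> ^^ j) (coeff p (k - j)) else 0)"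
proof -
  have "coeff (skew_mult \<theta> (monom c j) p) k =
      (\<Sum>i\<le>k. if i = j then c * (\<theta> ^^ i) (coeff p (k - i)) else 0)"
    unfolding coeff_skew_mult coeff_monom by (intro sum.cong) auto
  then show ?thesis by simp
qed

lemma skew_mult_const_left: "skew_mult \<theta> [:c:] p = smult c p"
  by (rule poly_eqI) (simp flip: monom_0 add: coeff_skew_mult_monom)

lemma skew_mult_one_left [simp]: "skew_mult \<theta> 1 p = p"
  using skew_mult_const_left[of 1 p] by (simp add: one_pCons)

lemma skew_mult_assoc: "skew_mult \<theta> (skew_mult \<theta> p q) r = skew_mult \<theta> p (skew_mult \<theta> q r)"
proof (rule poly_eqI)
  fix k
  define g where
    "g i j = coeff p i * (\<theta> ^^ i) (coeff q j) * (\<theta> ^^ (i + j)) (coeff r (k - (i + j)))" for i j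
  have "coeff (skew_mult \<theta> (skew_mult \<theta> p q) r) k = (\<Sum>t\<le>k. \<Sum>i\<le>t. g i (t - i))"
    by (simp add: coeff_skew_mult sum_distrib_right g_def)
  also have "\<dots> = (\<Sum>(i, j)\<in>{(i, j). i + j \<le> k}. g i j)"
    by (rule sum.triangle_reindex_eq[symmetric])
  also have "\<dots> = (\<Sum>(i, j)\<in>Sigma {..k} (\<lambda>i. {..k - i}). g i j)"
    by (rule sum.cong) auto
  also have "\<dots> = (\<Sum>i\<le>k. \<Sum>j\<le>k - i. g i j)"
    by (rule sum.Sigma[symmetric]) auto
  also have "\<dots> = coeff (skew_mult \<theta> p (skew_mult \<theta> q r)) k"
    by (simp add: coeff_skew_mult g_def funpow_hom_sum funpow_hom_mult sum_distrib_left
        funpow_add mult.assoc)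
  finally show "coeff (skew_mult \<theta> (skew_mult \<theta> p q) r) k =
    coeff (skew_mult \<theta> p (skew_mult \<theta> q r)) k" .
qed

lemma skew_mult_xn_minus_1: "skew_mult \<theta> q (xn_minus_1 n) = (monom 1 n - 1) * q"
proof (rule poly_eqI)
  fix k
  have "coeff (skew_mult \<theta> q (monom 1 j)) k = (if j \<le> k then coeff q (k - j) else 0)" for j
  proof -
    have "coeff (skew_mult \<theta> q (monom 1 j)) k = (\<Sum>i\<le>k. if i = k - j \<and> j \<le> k then coeff q i else 0)"
      unfolding coeff_skew_mult by (intro sum.cong) (auto simp: coeff_monom)
    then show ?thesis by auto
  qed
  from this[of 0] this[of n] show "coeff (skew_mult \<theta> q (xn_minus_1 n)) k = coeff ((monom 1 n - 1) * q) k"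
    by (simp add: xn_minus_1_def skew_mult_diff_right left_diff_distrib coeff_monom_mult one_poly_eq_simps)
qed

lemma degree_skew_mult_le: "degree (skew_mult \<theta> p r) \<le> degree p + degree r"
proof (rule degree_le, intro allI impI)
  fix k assume k: "degree p + degree r < k"
  have "coeff p i * (\<theta> ^^ i) (coeff r (k - i)) = 0" for i
    using k by (cases "i \<le> degree p") (auto simp: coeff_eq_0)
  then show "coeff (skew_mult \<theta> p r) k = 0"
    by (simp add: coeff_skew_mult)
qed

lemma coeff_skew_mult_degree_sum:
  "coeff (skew_mult \<theta> p r) (degree p + degree r) = lead_coeff p * (\<theta> ^^ degree p) (lead_coeff r)"
proof -
  have "coeff p i * (\<theta> ^^ i) (coeff r (degree p + degree r - i)) = 0" if "i \<noteq> degree p" for i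
    using that by (cases "i < degree p") (auto simp: coeff_eq_0)
  then show ?thesis
    unfolding coeff_skew_mult by (subst sum.remove[of _ "degree p"]) auto
qed

end

section \<open>Reduction modulo \<open>x\<^sup>n - 1\<close>\<close>

lemma coeff_xn_minus_1_0: "0 < n \<Longrightarrow> coeff (xn_minus_1 n :: 'a::comm_ring_1 poly) 0 = - 1"
  by (simp add: xn_minus_1_def coeff_monom)

lemma degree_xn_minus_1: "0 < n \<Longrightarrow> degree (xn_minus_1 n :: 'a::comm_ring_1 poly) = n"
  unfolding xn_minus_1_def diff_conv_add_uminus
  by (subst degree_add_eq_left) (auto simp: degree_monom_eq)

definition folded_coeff :: "nat \<Rightarrow> nat \<Rightarrow> 'a::comm_ring_1 poly \<Rightarrow> nat \<Rightarrow> 'a" where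
  "folded_coeff n N p k = (\<Sum>i | i \<le> N \<and> i mod n = k. coeff p i)"

lemma finite_bounded_residue_class: "finite {i::nat. i \<le> N \<and> i mod n = k}"
  by (rule finite_subset[of _ "{..N}"]) auto

lemma folded_coeff_cong_bound:
  assumes "degree p \<le> N" "degree p \<le> M"
  shows "folded_coeff n N p k = folded_coeff n M p k"
proof -
  have "folded_coeff n K p k = (\<Sum>i | i \<le> degree p \<and> i mod n = k. coeff p i)" if "degree p \<le> K" for K
    unfolding folded_coeff_def
    by (rule sum.mono_neutral_right)
       (use that finite_bounded_residue_class in \<open>auto simp: coeff_eq_0 intro: le_degree\<close>)
  with assms show ?thesis by simp
qed

lemma reduce_vec_folded_coeff:
  "degree p \<le> N \<Longrightarrow> reduce_vec n p = map (folded_coeff n N p) [0..<n]"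
  unfolding reduce_vec_def using folded_coeff_cong_bound[of p "degree p" N n]
  by (simp add: folded_coeff_def)

lemma folded_coeff_monom_mult:
  assumes "n > 0"
  shows "folded_coeff n (N + n) (monom 1 n * q) k = folded_coeff n N q k"
proof -
  have "folded_coeff n (N + n) (monom 1 n * q) k =
      (\<Sum>i | n \<le> i \<and> i \<le> N + n \<and> i mod n = k. coeff (monom 1 n * q) i)"
    unfolding folded_coeff_def
    by (rule sum.mono_neutral_right) (use finite_bounded_residue_class in \<open>auto simp: coeff_monom_mult\<close>)
  also have "\<dots> = folded_coeff n N q k"
    unfolding folded_coeff_def
    by (rule sum.reindex_bij_witness[where i="\<lambda>j. j + n" and j="\<lambda>i. i - n"])
       (auto simp: coeff_monom_mult le_diff_conv le_mod_geq)
  finally show ?thesis .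
qed

lemma reduce_vec_xn_minus_1_mult_add:
  assumes "n > 0"
  shows "reduce_vec n ((monom 1 n - 1) * q + p) = reduce_vec n p"
proof -
  define N where "N = degree q + degree p"
  have "degree (monom 1 n - 1 :: 'a poly) \<le> n"
    by (intro degree_diff_le) (auto simp: degree_monom_le)
  then have "degree ((monom 1 n - 1) * q) \<le> N + n"
    using degree_mult_le[of "monom 1 n - 1" q] by (simp add: N_def)
  then have deg: "degree ((monom 1 n - 1) * q + p) \<le> N + n"
    by (intro degree_add_le) (auto simp: N_def)
  have "folded_coeff n (N + n) ((monom 1 n - 1) * q + p) k = folded_coeff n (N + n) p k" for k
  proof -
    have "folded_coeff n (N + n) (monom 1 n * q) k = folded_coeff n (N + n) q k"
      using folded_coeff_monom_mult[OF assms, of N q k] folded_coeff_cong_bound[of q N "N + n"]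
      by (simp add: N_def)
    then show ?thesis
      by (simp add: folded_coeff_def algebra_simps sum.distrib sum_subtractf)
  qed
  then show ?thesis
    using reduce_vec_folded_coeff[OF deg] reduce_vec_folded_coeff[of p "N + n" n]
    by (simp add: N_def)
qed

lemma reduce_vec_of_degree_less:
  assumes "degree p < n"
  shows "reduce_vec n p = map (coeff p) [0..<n]"
proof -
  have "{i. i \<le> n - 1 \<and> i mod n = k} = {k}" if "k < n" for k
    using that by auto
  then show ?thesis
    using reduce_vec_folded_coeff[of p "n - 1" n] assms by (simp add: folded_coeff_def)
qed

lemma reduce_vec_inj:
  assumes "degree p < n" "degree q < n" "reduce_vec n p = reduce_vec n q"
  shows "p = q"
proof (rule poly_eqI)
  fix k
  show "coeff p k = coeff q k"
  proof (cases "k < n")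
    case True
    then show ?thesis
      using assms reduce_vec_of_degree_less[of p n] reduce_vec_of_degree_less[of q n]
      by (auto simp: map_eq_conv)
  qed (use assms in \<open>simp add: coeff_eq_0\<close>)
qed

lemma mod_eq_iff_complement_mod_eq:
  fixes n d i k :: nat
  assumes "0 < n" "d mod n = n - 1" "i \<le> d" "k < n"
  shows "i mod n = k \<longleftrightarrow> (d - i) mod n = n - 1 - k"
proof -
  define a b where "a = i mod n" and "b = (d - i) mod n"
  have "a < n" "b < n" using assms(1) by (auto simp: a_def b_def)
  have "(a + b) mod n = d mod n"
    unfolding a_def b_def using assms(3) by (simp add: mod_add_eq)
  moreover have "(a + b) mod n = a + b - n" if "n \<le> a + b"
  proof -
    have "(a + b) mod n = (a + b - n) mod n" using that by (rule le_mod_geq)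
    also have "\<dots> = a + b - n" using \<open>a < n\<close> \<open>b < n\<close> by simp
    finally show ?thesis .
  qed
  ultimately have "a + b = n - 1"
    using \<open>a < n\<close> \<open>b < n\<close> assms(2) by (cases "a + b < n") auto
  then have "a = k \<longleftrightarrow> b = n - 1 - k"
    using assms(4) by linarith
  then show ?thesis
    by (simp only: a_def b_def)
qed

lemma exists_even_degree_congruent_minus_one:
  fixes n m a :: nat
  assumes "0 < n" "even n" "odd m"
  shows "\<exists>D\<ge>a. even D \<and> (D + m) mod n = n - 1"
proof -
  define t where "t = a + m"
  have "Suc t \<le> n * Suc t"
    using assms(1) by (cases n) auto
  then have "t < n * Suc t"
    by linarith
  moreover have "even (n * Suc t - (1 + m))"
    using assms(2,3) by (intro dvd_diff_nat) auto
  moreover have "(n * Suc t - (1 + m) + m) mod n = n - 1"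
  proof -
    have "n * Suc t - (1 + m) + m = n * t + (n - 1)"
      using assms(1) \<open>t < n * Suc t\<close> by (simp add: t_def algebra_simps)
    moreover have "(n * t + (n - 1)) mod n = n - 1"
      using assms(1) by (subst mod_mult_self4) simp
    ultimately show ?thesis by simp
  qed
  ultimately show ?thesis
    by (intro exI[of _ "n * Suc t - (1 + m)"]) (auto simp: t_def)
qed

section \<open>Skew polynomials over a field\<close>

locale field_endomorphism = ring_endomorphism \<theta> for \<theta> :: "'a::field \<Rightarrow> 'a"
begin

lemma hom_eq_0_iff [simp]: "\<theta> a = 0 \<longleftrightarrow> a = 0"
proof
  assume "\<theta> a = 0"
  show "a = 0"
  proof (rule ccontr)
    assume "a \<noteq> 0"
    then have "\<theta> a * \<theta> (inverse a) = 1"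
      by (simp add: hom_one flip: hom_mult)
    with \<open>\<theta> a = 0\<close> show False by simp
  qed
qed simp

lemma funpow_hom_eq_0_iff [simp]: "(\<theta> ^^ i) a = 0 \<longleftrightarrow> a = 0"
  by (induction i) auto

lemma degree_skew_mult:
  assumes "p \<noteq> 0" "r \<noteq> 0"
  shows "degree (skew_mult \<theta> p r) = degree p + degree r"
proof (rule antisym)
  show "degree p + degree r \<le> degree (skew_mult \<theta> p r)"
    by (rule le_degree) (use assms in \<open>simp add: coeff_skew_mult_degree_sum\<close>)
qed (rule degree_skew_mult_le)

lemma skew_mult_eq_0_iff: "skew_mult \<theta> p r = 0 \<longleftrightarrow> p = 0 \<or> r = 0"
  by (metis coeff_skew_mult_degree_sum funpow_hom_eq_0_iff leading_coeff_0_iff mult_eq_0_iff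
      skew_mult_zero_left skew_mult_zero_right coeff_0)

lemma skew_division:
  assumes "h \<noteq> 0"
  shows "\<exists>q r. f = skew_mult \<theta> q h + r \<and> (r = 0 \<or> degree r < degree h)"
proof (induction "degree f" arbitrary: f rule: less_induct)
  case less
  show ?case
  proof (cases "f = 0 \<or> degree f < degree h")
    case True
    then show ?thesis by (intro exI[of _ 0] exI[of _ f]) auto
  next
    case False
    define e where "e = degree f - degree h"
    define c where "c = lead_coeff f / (\<theta> ^^ e) (lead_coeff h)"
    define f' where "f' = f - skew_mult \<theta> (monom c e) h"
    have "coeff f' k = 0" if "degree f \<le> k" for k
      using False assms that
      by (cases "k = degree f") (auto simp: f'_def coeff_skew_mult_monom c_def e_def coeff_eq_0)
    then have "f' = 0 \<or> degree f' < degree f"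
      by (metis leading_coeff_0_iff not_le)
    then obtain q r where qr: "f' = skew_mult \<theta> q h + r" "r = 0 \<or> degree r < degree h"
      using less[of f'] by (metis add_0 skew_mult_zero_left)
    have "f = skew_mult \<theta> (q + monom c e) h + r"
      using qr(1) by (simp add: f'_def skew_mult_add_left algebra_simps)
    with qr(2) show ?thesis by blast
  qed
qed

lemma coeff_eq_0_below_if_skew_mult:
  assumes g0: "coeff g 0 \<noteq> 0" and low: "\<And>j. j < D \<Longrightarrow> coeff (skew_mult \<theta> r g) j = 0"
  shows "j < D \<Longrightarrow> coeff r j = 0"
proof (induction j rule: less_induct)
  case (less j)
  have "coeff (skew_mult \<theta> r g) j = (\<Sum>i\<in>{j}. coeff r i * (\<theta> ^^ i) (coeff g (j - i)))"
    unfolding coeff_skew_mult by (rule sum.mono_neutral_right) (use less in auto)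
  with low[OF less.prems] g0 show ?case by simp
qed

lemma skew_code_skew_mult_subset: "skew_code \<theta> n (skew_mult \<theta> a g) \<subseteq> skew_code \<theta> n g"
  unfolding skew_code_def by (auto simp flip: skew_mult_assoc)

lemma skew_code_smult:
  assumes "c \<noteq> 0"
  shows "skew_code \<theta> n (smult c g) = skew_code \<theta> n g"
proof
  have "g = skew_mult \<theta> [:inverse c:] (smult c g)"
    using assms by (simp add: skew_mult_const_left)
  then show "skew_code \<theta> n g \<subseteq> skew_code \<theta> n (smult c g)"
    by (metis skew_code_skew_mult_subset)
qed (metis skew_code_skew_mult_subset skew_mult_const_left)

lemma right_divisor_xn_minus_1:
  assumes "0 < n" "skew_right_dvd \<theta> g (xn_minus_1 n)"
  obtains h where "xn_minus_1 n = skew_mult \<theta> h g" "h \<noteq> 0" "degree h + degree g = n" "coeff g 0 \<noteq> 0"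
proof -
  obtain h where h: "xn_minus_1 n = skew_mult \<theta> h g"
    using assms(2) by (auto simp: skew_right_dvd_def)
  have "coeff (skew_mult \<theta> h g) 0 = - 1"
    unfolding h[symmetric] using assms(1) by (rule coeff_xn_minus_1_0)
  then have "h \<noteq> 0" "g \<noteq> 0" "coeff g 0 \<noteq> 0"
    by (auto simp: coeff_skew_mult)
  moreover have "degree (skew_mult \<theta> h g) = n"
    unfolding h[symmetric] using assms(1) by (rule degree_xn_minus_1)
  then have "degree h + degree g = n"
    using degree_skew_mult[OF \<open>h \<noteq> 0\<close> \<open>g \<noteq> 0\<close>] by simp
  ultimately show ?thesis
    using that h by blast
qed

lemma skew_code_element_remainder:
  assumes "0 < n" "xn_minus_1 n = skew_mult \<theta> h g" "h \<noteq> 0" "c \<in> skew_code \<theta> n g"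
  obtains r where "r = 0 \<or> degree r < degree h" "c = reduce_vec n (skew_mult \<theta> r g)"
proof -
  obtain f where f: "c = reduce_vec n (skew_mult \<theta> f g)"
    using assms(4) by (auto simp: skew_code_def)
  obtain q r where qr: "f = skew_mult \<theta> q h + r" "r = 0 \<or> degree r < degree h"
    using skew_division[OF assms(3)] by blast
  have "skew_mult \<theta> f g = (monom 1 n - 1) * q + skew_mult \<theta> r g"
    by (simp add: qr(1) skew_mult_add_left skew_mult_assoc skew_mult_xn_minus_1 flip: assms(2))
  then show ?thesis
    using that qr(2) f reduce_vec_xn_minus_1_mult_add[OF assms(1)] by metis
qed

end

section \<open>Reflection under a field involution\<close>

locale field_involution = field_endomorphism \<theta> for \<theta> :: "'a::field \<Rightarrow> 'a" +
  assumes involutive: "\<theta> (\<theta> a) = a"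
begin

lemma funpow_involution: "\<theta> ^^ i = (if even i then id else \<theta>)"
  by (induction i) (auto simp: involutive fun_eq_iff)

definition theta_reflect :: "nat \<Rightarrow> 'a poly \<Rightarrow> 'a poly" where
  "theta_reflect d p = Poly (map (\<lambda>i. \<theta> (coeff p (d - i))) [0..<Suc d])"

lemma coeff_theta_reflect:
  "coeff (theta_reflect d p) k = (if k \<le> d then \<theta> (coeff p (d - k)) else 0)"
  by (simp add: theta_reflect_def nth_default_def del: upt_Suc)

lemma degree_theta_reflect_le: "degree (theta_reflect d p) \<le> d"
  by (rule degree_le) (simp add: coeff_theta_reflect)

lemma theta_reflect_theta_reflect: "degree p \<le> d \<Longrightarrow> theta_reflect d (theta_reflect d p) = p"
  by (rule poly_eqI) (auto simp: coeff_theta_reflect involutive coeff_eq_0)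

lemma theta_reflect_add: "theta_reflect d (p + q) = theta_reflect d p + theta_reflect d q"
  by (rule poly_eqI) (simp add: coeff_theta_reflect hom_add)

lemma theta_reflect_smult: "theta_reflect d (smult c p) = smult (\<theta> c) (theta_reflect d p)"
  by (rule poly_eqI) (simp add: coeff_theta_reflect hom_mult)

lemma theta_reflect_shift:
  "degree p \<le> m \<Longrightarrow> theta_reflect (D + m) p = monom 1 D * theta_reflect m p"
  by (rule poly_eqI) (auto simp: coeff_theta_reflect coeff_monom_mult coeff_eq_0 add.commute[of D m])

lemma skew_mult_monom_even: "even D \<Longrightarrow> skew_mult \<theta> (monom c D) p = monom c D * p"
  by (rule poly_eqI) (simp add: coeff_skew_mult_monom coeff_monom_mult funpow_involution)

lemma theta_palindromic_iff_theta_reflect: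
  "theta_palindromic \<theta> p \<longleftrightarrow> p \<noteq> 0 \<and> theta_reflect (degree p) p = p"
proof -
  have "theta_reflect (degree p) p = p \<longleftrightarrow> (\<forall>i\<le>degree p. coeff p i = \<theta> (coeff p (degree p - i)))"
    unfolding poly_eq_iff coeff_theta_reflect by (metis coeff_eq_0 not_le)
  then show ?thesis
    unfolding theta_palindromic_def by blast
qed

lemma theta_reflect_skew_mult:
  assumes "degree f \<le> D" "degree g \<le> m" "even D"
  shows "theta_reflect (D + m) (skew_mult \<theta> f g) =
    skew_mult \<theta> (theta_reflect D f) (theta_reflect m g)"
proof (rule poly_eqI)
  fix k
  show "coeff (theta_reflect (D + m) (skew_mult \<theta> f g)) k =
    coeff (skew_mult \<theta> (theta_reflect D f) (theta_reflect m g)) k"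
  proof (cases "k \<le> D + m")
    case False
    have "degree (skew_mult \<theta> (theta_reflect D f) (theta_reflect m g)) \<le> D + m"
      using degree_skew_mult_le[of "theta_reflect D f" "theta_reflect m g"]
        degree_theta_reflect_le[of D f] degree_theta_reflect_le[of m g] by linarith
    with False show ?thesis by (simp add: coeff_theta_reflect coeff_eq_0)
  next
    case True
    define t where "t = D + m - k"
    define S where "S = {i. i \<le> t \<and> i \<le> D \<and> t - i \<le> m}"
    define T where "T i = \<theta> (coeff f i) * (\<theta> ^^ Suc i) (coeff g (t - i))" for i
    have "coeff (theta_reflect (D + m) (skew_mult \<theta> f g)) k = (\<Sum>i\<le>t. T i)"
      using True by (simp add: coeff_theta_reflect coeff_skew_mult hom_sum hom_mult t_def T_def)
    also have "\<dots> = sum T S"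
      by (rule sum.mono_neutral_right)
         (use assms(1,2) in \<open>auto simp: S_def T_def simp del: funpow.simps dest!: le_degree\<close>)
    also have "\<dots> = (\<Sum>u\<le>k. coeff (theta_reflect D f) u * (\<theta> ^^ u) (coeff (theta_reflect m g) (k - u)))"
    proof (rule sum.reindex_bij_witness_not_neutral[where ?S'="{}"
          and ?T'="{u. u \<le> k \<and> \<not> (u \<le> D \<and> k - u \<le> m)}"
          and ?i="\<lambda>u. D - u" and ?j="\<lambda>i. D - i"])
      fix i assume i: "i \<in> S"
      then have "m - (k - (D - i)) = t - i" "k - (D - i) \<le> m" "even (D - i) \<longleftrightarrow> even i"
        using True assms(3) by (auto simp: S_def t_def)
      then show "coeff (theta_reflect D f) (D - i) *
          (\<theta> ^^ (D - i)) (coeff (theta_reflect m g) (k - (D - i))) = T i"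
        using i by (simp add: S_def T_def coeff_theta_reflect funpow_involution involutive)
    qed (use True in \<open>auto simp: S_def t_def coeff_theta_reflect\<close>)
    also have "\<dots> = coeff (skew_mult \<theta> (theta_reflect D f) (theta_reflect m g)) k"
      by (simp add: coeff_skew_mult)
    finally show ?thesis .
  qed
qed

lemma reduce_vec_theta_reflect:
  assumes "0 < n" "degree p \<le> d" "d mod n = n - 1"
  shows "map \<theta> (rev (reduce_vec n p)) = reduce_vec n (theta_reflect d p)"
proof -
  have "\<theta> (folded_coeff n d p (n - 1 - k)) = folded_coeff n d (theta_reflect d p) k" if "k < n" for k
  proof -
    have "folded_coeff n d (theta_reflect d p) k = (\<Sum>i | i \<le> d \<and> i mod n = k. \<theta> (coeff p (d - i)))"
      unfolding folded_coeff_def by (rule sum.cong) (auto simp: coeff_theta_reflect)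
    also have "\<dots> = (\<Sum>j | j \<le> d \<and> j mod n = n - 1 - k. \<theta> (coeff p j))"
      by (rule sum.reindex_bij_witness[where i="\<lambda>j. d - j" and j="\<lambda>i. d - i"])
         (use mod_eq_iff_complement_mod_eq[OF assms(1,3) _ that] in auto)
    finally show ?thesis
      by (simp add: folded_coeff_def hom_sum)
  qed
  then show ?thesis
    unfolding reduce_vec_folded_coeff[OF assms(2)] reduce_vec_folded_coeff[OF degree_theta_reflect_le]
    by (intro nth_equalityI) (auto simp: rev_nth)
qed

lemma reversible_DNA_if_theta_palindromic:
  assumes "0 < n" "even n" "odd (degree g)" "theta_palindromic \<theta> g"
  shows "reversible_DNA \<theta> (skew_code \<theta> n g)"
  unfolding reversible_DNA_def skew_code_def
proof (intro ballI CollectI, elim CollectE exE conjE)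
  fix c f assume c: "c = reduce_vec n (skew_mult \<theta> f g)"
  obtain D where D: "degree f \<le> D" "even D" "(D + degree g) mod n = n - 1"
    using exists_even_degree_congruent_minus_one[OF assms(1-3)] by blast
  have "degree (skew_mult \<theta> f g) \<le> D + degree g"
    using degree_skew_mult_le[of f g] D(1) by simp
  then have "map \<theta> (rev c) = reduce_vec n (theta_reflect (D + degree g) (skew_mult \<theta> f g))"
    unfolding c by (rule reduce_vec_theta_reflect[OF assms(1) _ D(3)])
  also have "\<dots> = reduce_vec n (skew_mult \<theta> (theta_reflect D f) g)"
    using theta_reflect_skew_mult[OF D(1) order.refl D(2)] assms(4)
    by (simp add: theta_palindromic_iff_theta_reflect)
  finally show "\<exists>f'. map \<theta> (rev c) = reduce_vec n (skew_mult \<theta> f' g) \<and> True"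
    by blast
qed

lemma skew_mult_eq_shift_imp_smult:
  assumes g0: "coeff g 0 \<noteq> 0" and eq: "skew_mult \<theta> r g = monom 1 D * p"
    and "degree p \<le> degree g" "even D"
  shows "p = smult (coeff r D) g"
proof (cases "r = 0")
  case True
  then show ?thesis using eq by simp
next
  case False
  have "g \<noteq> 0" using g0 by auto
  then have "p \<noteq> 0" using eq False by (auto simp: skew_mult_eq_0_iff)
  have "degree r + degree g = D + degree p"
    using eq degree_skew_mult[OF False \<open>g \<noteq> 0\<close>] \<open>p \<noteq> 0\<close>
    by (simp add: degree_mult_eq degree_monom_eq)
  then have "degree r \<le> D" using assms(3) by linarith
  moreover have "coeff r j = 0" if "j < D" for j
    using coeff_eq_0_below_if_skew_mult[OF g0 _ that] eq by (simp add: coeff_monom_mult)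
  ultimately have "r = monom (coeff r D) D"
    by (intro poly_eqI) (metis coeff_monom coeff_eq_0 linorder_neqE_nat le_less_trans)
  then have "monom 1 D * p = smult (coeff r D) (monom 1 D) * g"
    using eq skew_mult_monom_even[OF assms(4), of "coeff r D" g] by (simp add: smult_monom)
  then show ?thesis by (simp flip: mult_smult_right)
qed

lemma theta_reflect_eq_smult_if_reversible:
  assumes n: "0 < n" "even n" and m: "odd (degree g)"
    and dvd: "skew_right_dvd \<theta> g (xn_minus_1 n)"
    and rev: "reversible_DNA \<theta> (skew_code \<theta> n g)"
  shows "\<exists>c. theta_reflect (degree g) g = smult c g"
proof -
  obtain h where h: "xn_minus_1 n = skew_mult \<theta> h g" "h \<noteq> 0"
      "degree h + degree g = n" "coeff g 0 \<noteq> 0"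
    using right_divisor_xn_minus_1[OF n(1) dvd] by blast
  define D where "D = n - 1 - degree g"
  have "0 < degree h"
    using n(2) m h(3) by (intro gr0I) auto
  then have D: "even D" "D + degree g = n - 1"
    using n m h(3) by (auto simp: D_def)
  define P where "P = monom 1 D * theta_reflect (degree g) g"
  have "reduce_vec n g \<in> skew_code \<theta> n g"
    unfolding skew_code_def by (auto intro!: exI[of _ 1])
  then have "map \<theta> (rev (reduce_vec n g)) \<in> skew_code \<theta> n g"
    using rev by (simp add: reversible_DNA_def)
  also have "map \<theta> (rev (reduce_vec n g)) = reduce_vec n P"
    using reduce_vec_theta_reflect[OF n(1), of g "D + degree g"] theta_reflect_shift[of g "degree g" D]
      D n(1)
    by (simp add: P_def)
  finally obtain r where
      r: "r = 0 \<or> degree r < degree h" "reduce_vec n P = reduce_vec n (skew_mult \<theta> r g)"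
    by (rule skew_code_element_remainder[OF n(1) h(1,2)])
  have "degree P < n"
    using degree_mult_le[of "monom 1 D" "theta_reflect (degree g) g"]
      degree_theta_reflect_le[of "degree g" g] degree_monom_le[of "1::'a" D] D(2) n(1)
    unfolding P_def by linarith
  moreover have "degree (skew_mult \<theta> r g) < n"
    using r(1) h(3) n(1) degree_skew_mult_le[of r g] by auto
  ultimately have "skew_mult \<theta> r g = P"
    using reduce_vec_inj r(2) by metis
  then have "theta_reflect (degree g) g = smult (coeff r D) g"
    using skew_mult_eq_shift_imp_smult[OF h(4) _ degree_theta_reflect_le D(1)] by (simp add: P_def)
  then show ?thesis by blast
qed

lemma theta_palindromic_smult_if_theta_reflect_eq_smult:
  assumes "theta_reflect (degree g) g = smult c g" "g \<noteq> 0" "\<exists>x. \<theta> x \<noteq> x"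
  shows "\<exists>b. b \<noteq> 0 \<and> theta_palindromic \<theta> (smult b g)"
proof -
  obtain \<beta> where \<beta>: "\<beta> + \<theta> \<beta> * c \<noteq> 0"
  proof (cases "c = - 1")
    case True
    obtain x where "\<theta> x \<noteq> x" using assms(3) by blast
    with True show ?thesis using that[of x] by simp
  qed (use that[of 1] hom_one in \<open>auto simp: add_eq_0_iff\<close>)
  define b where "b = \<beta> + \<theta> \<beta> * c"
  have "smult b g = smult \<beta> g + theta_reflect (degree g) (smult \<beta> g)"
    by (simp add: b_def theta_reflect_smult assms(1) smult_add_left)
  then have "theta_reflect (degree g) (smult b g) = smult b g"
    by (metis theta_reflect_add theta_reflect_theta_reflect add.commute degree_smult_le)
  then show ?thesis
    using \<beta> assms(2) by (auto simp: theta_palindromic_iff_theta_reflect b_def)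
qed

lemma theta_palindromic_generator_if_reversible:
  assumes "0 < n" "even n" "odd (degree g)" "skew_right_dvd \<theta> g (xn_minus_1 n)"
    and "reversible_DNA \<theta> (skew_code \<theta> n g)" "\<exists>x. \<theta> x \<noteq> x"
  shows "\<exists>g'. theta_palindromic \<theta> g' \<and> skew_code \<theta> n g' = skew_code \<theta> n g"
proof -
  obtain c where "theta_reflect (degree g) g = smult c g"
    using theta_reflect_eq_smult_if_reversible[OF assms(1-5)] by blast
  moreover have "g \<noteq> 0"
    using assms(3) by auto
  ultimately obtain b where "b \<noteq> 0" "theta_palindromic \<theta> (smult b g)"
    using theta_palindromic_smult_if_theta_reflect_eq_smult assms(6) by blast
  then show ?thesis
    using skew_code_smult by blast
qed

end

section \<open>The Frobenius involution\<close>

text \<open>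
  Lagrange's theorem in the unit group. The library's \<open>finite_field_power_card_eq_same\<close>
  does not apply: its sort \<open>finite_field\<close> is not implied by \<open>{field, finite}\<close> at the
  level of sorts.
\<close>

lemma power_card_UNIV_eq_self:
  fixes x :: "'a :: {field,finite}"
  shows "x ^ card (UNIV :: 'a set) = x"
proof (cases "x = 0")
  case False
  define G :: "'a monoid" where "G = \<lparr>carrier = UNIV - {0}, monoid.mult = (*), one = 1\<rparr>"
  interpret G: comm_group G
    by (rule comm_groupI) (auto simp: G_def mult.assoc mult.commute intro!: bexI[of _ "inverse x" for x])
  have pow: "y [^]\<^bsub>G\<^esub> k = y ^ k" for y :: 'a and k
    by (induction k) (simp_all add: G_def)
  have "x ^ (card (UNIV :: 'a set) - 1) = 1"
    using G.power_order_eq_one[of x] False by (simp add: pow card_Diff_singleton) (simp add: G_def)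
  then show ?thesis
    by (metis card_gt_0_iff finite_UNIV power_minus_mult UNIV_not_empty mult_1)
qed (simp add: finite_UNIV_card_ge_0)

lemma CHAR_eq_2_if_even_card:
  assumes "even (card (UNIV :: 'a :: {field,finite} set))"
  shows "CHAR('a) = 2"
proof -
  have "(1 :: 'a) = - 1"
    using power_card_UNIV_eq_self[of "- 1 :: 'a"] assms by simp
  then have "of_nat 2 = (0 :: 'a)"
    by (metis add.right_inverse one_add_one of_nat_numeral)
  then have "CHAR('a) dvd 2"
    by (simp only: of_nat_eq_0_iff_char_dvd)
  then have "CHAR('a) \<le> 2"
    by (rule dvd_imp_le) simp
  then show ?thesis
    using finite_imp_CHAR_pos[where ?'a = 'a, OF finite_UNIV] CHAR_not_1[where ?'a = 'a] by linarith
qed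

lemma field_involution_frobenius_power:
  assumes "CHAR('a) = 2" "card (UNIV :: 'a :: {field,finite} set) = (2 ^ k) ^ 2"
  shows "field_involution (\<lambda>a::'a. a ^ 2 ^ k)"
proof unfold_locales
  fix a b :: 'a
  show "(a + b) ^ 2 ^ k = a ^ 2 ^ k + b ^ 2 ^ k"
    by (rule freshmans_dream') (simp_all add: assms(1))
  show "(a * b) ^ 2 ^ k = a ^ 2 ^ k * b ^ 2 ^ k"
    by (rule power_mult_distrib)
  show "(a ^ 2 ^ k) ^ 2 ^ k = a"
    using power_card_UNIV_eq_self[of a] by (simp add: assms(2) power2_eq_square flip: power_mult)
qed simp

lemma exists_power_ne_self:
  assumes "2 \<le> Q" "Q < card (UNIV :: 'a :: {field,finite} set)"
  shows "\<exists>x::'a. x ^ Q \<noteq> x"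
proof (rule ccontr)
  assume "\<not> (\<exists>x::'a. x ^ Q \<noteq> x)"
  define p :: "'a poly" where "p = monom 1 Q - monom 1 1"
  have "degree p = Q"
    unfolding p_def diff_conv_add_uminus using assms(1)
    by (subst degree_add_eq_left) (auto simp: degree_monom_eq)
  then have "p \<noteq> 0" using assms(1) by auto
  have "{x. poly p x = 0} = UNIV"
    using \<open>\<not> (\<exists>x::'a. x ^ Q \<noteq> x)\<close> by (auto simp: p_def poly_monom)
  then show False
    using card_poly_roots_bound[OF \<open>p \<noteq> 0\<close>] \<open>degree p = Q\<close> assms(2) by simp
qed

theorem theorem2:
  fixes s n :: nat and g :: "'a::{field,finite} poly" and \<theta> :: "'a \<Rightarrow> 'a"
  assumes "s \<ge> 1"
    and "card (UNIV :: 'a set) = 4 ^ (2 * s)"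
    and "\<theta> = (\<lambda>a. a ^ (4 ^ s))"
    and "even n" and "n > 0"
    and "skew_right_dvd \<theta> g (xn_minus_1 n)"
    and "odd (degree g)"
  shows "(theta_palindromic \<theta> g \<longrightarrow> reversible_DNA \<theta> (skew_code \<theta> n g))
       \<and> (reversible_DNA \<theta> (skew_code \<theta> n g) \<longrightarrow>
            (\<exists>g'. theta_palindromic \<theta> g' \<and> skew_code \<theta> n g' = skew_code \<theta> n g))"
proof -
  have Q: "(4::nat) ^ s = 2 ^ (2 * s)"
    by (simp add: power_mult)
  have card: "card (UNIV :: 'a set) = (4 ^ s) ^ 2"
    unfolding assms(2) by (simp only: power_mult[symmetric] mult.commute[of s 2])
  have "(4::nat) ^ 1 \<le> 4 ^ s"
    using assms(1) by (rule power_increasing) simp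
  then have "2 \<le> (4::nat) ^ s" by simp
  have "CHAR('a) = 2"
    using assms(1) by (intro CHAR_eq_2_if_even_card) (simp add: card)
  then interpret field_involution \<theta>
    unfolding assms(3) Q using card[unfolded Q] by (rule field_involution_frobenius_power)
  have "\<exists>x. \<theta> x \<noteq> x"
    unfolding assms(3) using \<open>2 \<le> 4 ^ s\<close>
    by (intro exists_power_ne_self) (simp_all add: card power2_eq_square)
  then show ?thesis
    using reversible_DNA_if_theta_palindromic theta_palindromic_generator_if_reversible assms(4-7)
    by blast
qed

end
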